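(* Let $\mathcal{F}_A$ and $\mathcal{F}_B$ be scaling functions associated with the sets $A = \{p : \mathcal{F}_A(p,\theta) \le 1\}$ and $B = \{p : \mathcal{F}_B(p,\theta) \le 1\}$, respectively, and fix $\theta$. Consider the problem $\min_{p \in \mathbb{R}^{n_p}} \mathcal{F}_A(p,\theta)$ s.t. $\mathcal{F}_B(p,\theta) \le 1$, with Lagrangian $L(p,\theta,\lambda) = \mathcal{F}_A(p,\theta) + \lambda(\mathcal{F}_B(p,\theta) - 1)$. If $A \cap B = \varnothing$, then any pair of an optimal primal variable $p^\star$ and an optimal dual variable $\lambda^\star$ of this problem satisfies $\mathcal{F}_A(p^\star,\theta) > 1$, $\lambda^\star > 0$, $\frac{\partial \mathcal{F}_B}{\partial p}(p^\star,\theta) \ne 0$, and $\mathcal{F}_B(p^\star,\theta) = 1$.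
   Context: A scaling function (with parameters $\theta \in \mathbb{R}^{n_\theta}$) for a closed set $A \subset \mathbb{R}^{n_p}$ with non-empty interior is a $\mathcal{C}^2$ function $\mathcal{F}_A : \mathbb{R}^{n_p} \times \mathbb{R}^{n_\theta} \to \mathbb{R}$ such that, for each $\theta$, $\mathcal{F}_A(\cdot,\theta)$ is convex, $A = \{p \in \mathbb{R}^{n_p} : \mathcal{F}_A(p,\theta) \le 1\}$, and there exists $p \in A$ with $\mathcal{F}_A(p,\theta) < 1$. An optimal primal variable is a minimizer $p^\star$; an optimal dual variable is a $\lambda^\star \ge 0$ maximizing the dual function $\lambda \mapsto \inf_p L(p,\theta,\lambda)$ over $\lambda \ge 0$. *)

theory Defs
  imports "HOL-Analysis.Analysis"
begin

definition C2 :: "('a::euclidean_space \<Rightarrow> real) \<Rightarrow> bool" where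
  "C2 f \<longleftrightarrow> (\<exists>Df :: 'a \<Rightarrow> ('a \<Rightarrow>\<^sub>L real). \<exists>D2f :: 'a \<Rightarrow> ('a \<Rightarrow>\<^sub>L ('a \<Rightarrow>\<^sub>L real)).
      (\<forall>x. (f has_derivative blinfun_apply (Df x)) (at x)) \<and>
      (\<forall>x. (Df has_derivative blinfun_apply (D2f x)) (at x)) \<and>
      continuous_on UNIV D2f)"

definition scaling_function ::
  "('p::euclidean_space \<Rightarrow> 't::euclidean_space \<Rightarrow> real) \<Rightarrow> 'p set \<Rightarrow> bool" where
  "scaling_function F A \<longleftrightarrow>
     closed A \<and> interior A \<noteq> {} \<and>
     C2 (\<lambda>z. F (fst z) (snd z)) \<and>
     (\<forall>\<theta>. convex_on UNIV (\<lambda>p. F p \<theta>)) \<and>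
     (\<forall>\<theta>. A = {p. F p \<theta> \<le> 1}) \<and>
     (\<forall>\<theta>. \<exists>p\<in>A. F p \<theta> < 1)"

definition lagrangian ::
  "('p \<Rightarrow> 't \<Rightarrow> real) \<Rightarrow> ('p \<Rightarrow> 't \<Rightarrow> real) \<Rightarrow> 'p \<Rightarrow> 't \<Rightarrow> real \<Rightarrow> real" where
  "lagrangian FA FB p \<theta> l = FA p \<theta> + l * (FB p \<theta> - 1)"

text \<open>Dual function (extended-real valued, since the infimum may be -infinity).\<close>
definition dual_fun ::
  "('p \<Rightarrow> 't \<Rightarrow> real) \<Rightarrow> ('p \<Rightarrow> 't \<Rightarrow> real) \<Rightarrow> 't \<Rightarrow> real \<Rightarrow> ereal" where
  "dual_fun FA FB \<theta> l = (INF p. ereal (lagrangian FA FB p \<theta> l))"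

definition optimal_primal ::
  "('p \<Rightarrow> 't \<Rightarrow> real) \<Rightarrow> ('p \<Rightarrow> 't \<Rightarrow> real) \<Rightarrow> 't \<Rightarrow> 'p \<Rightarrow> bool" where
  "optimal_primal FA FB \<theta> ps \<longleftrightarrow>
     FB ps \<theta> \<le> 1 \<and> (\<forall>p. FB p \<theta> \<le> 1 \<longrightarrow> FA ps \<theta> \<le> FA p \<theta>)"

definition optimal_dual ::
  "('p \<Rightarrow> 't \<Rightarrow> real) \<Rightarrow> ('p \<Rightarrow> 't \<Rightarrow> real) \<Rightarrow> 't \<Rightarrow> real \<Rightarrow> bool" where
  "optimal_dual FA FB \<theta> ls \<longleftrightarrow>
     ls \<ge> 0 \<and> (\<forall>l\<ge>0. dual_fun FA FB \<theta> l \<le> dual_fun FA FB \<theta> ls)"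

end

theory Submission
  imports Defs
begin

(* Since B misses A, the constrained minimum value F_A(p\<^sup>\<star>) exceeds 1, while F_A < 1 somewhere.
   Convexity then forces the constraint to be active, and the derivative of F_B at p\<^sup>\<star> cannot
   vanish, for otherwise p\<^sup>\<star> would minimise F_B although F_B < 1 somewhere.  With a nonzero
   constraint gradient, the absence of a common descent direction gives a KKT multiplier
   \<mu> \<ge> 0; by convexity the Lagrangian at \<mu> is bounded below by F_A(p\<^sup>\<star>) > 1, whereas the dual
   function at 0 is at most inf F_A < 1.  Hence no optimal dual variable can be 0. *)

lemma has_field_derivative_along_line:
  fixes f :: "'a::real_normed_vector \<Rightarrow> real"
  assumes "(f has_derivative D) (at x)"
  shows "((\<lambda>t. f (x + t *\<^sub>R v)) has_field_derivative D v) (at 0)"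
proof -
  have line: "((\<lambda>t::real. x + t *\<^sub>R v) has_derivative (\<lambda>t. t *\<^sub>R v)) (at 0)"
    by (auto intro!: derivative_eq_intros)
  have "((\<lambda>t. f (x + t *\<^sub>R v)) has_derivative (\<lambda>t. D (t *\<^sub>R v))) (at 0)"
    using has_derivative_compose[OF line] assms by simp
  moreover have "(\<lambda>t. D (t *\<^sub>R v)) = (\<lambda>t. D v * t)"
    using has_derivative_linear[OF assms] by (auto simp: linear_cmul)
  ultimately show ?thesis
    by (simp add: has_field_derivative_def)
qed

lemma convex_on_line:
  fixes f :: "'a::real_vector \<Rightarrow> real"
  assumes "convex_on UNIV f"
  shows "convex_on UNIV (\<lambda>t::real. f (x + t *\<^sub>R v))"
proof (rule convex_onI)
  fix u s t :: real
  assume "0 < u" "u < 1"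
  have "x + ((1 - u) *\<^sub>R s + u *\<^sub>R t) *\<^sub>R v
      = (1 - u) *\<^sub>R (x + s *\<^sub>R v) + u *\<^sub>R (x + t *\<^sub>R v)"
    by (simp add: algebra_simps)
  then show "f (x + ((1 - u) *\<^sub>R s + u *\<^sub>R t) *\<^sub>R v)
      \<le> (1 - u) * f (x + s *\<^sub>R v) + u * f (x + t *\<^sub>R v)"
    using convex_onD[OF assms, of u "x + s *\<^sub>R v" "x + t *\<^sub>R v"] \<open>0 < u\<close> \<open>u < 1\<close>
    by simp
qed simp

lemma convex_on_ge_tangent:
  fixes f :: "'a::real_normed_vector \<Rightarrow> real"
  assumes "convex_on UNIV f" and "(f has_derivative D) (at x)"
  shows "f x + D (y - x) \<le> f y"
proof -
  let ?g = "\<lambda>t. f (x + t *\<^sub>R (y - x))"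
  have "(?g has_field_derivative D (y - x)) (at 0 within UNIV)"
    using has_field_derivative_along_line[OF assms(2)] by simp
  then have "D (y - x) * (1 - 0) \<le> ?g 1 - ?g 0"
    by (intro convex_on_imp_above_tangent[OF convex_on_line[OF assms(1)]]) auto
  then show ?thesis
    by simp
qed

lemma convex_on_zero_derivative_imp_minimum:
  fixes f :: "'a::real_normed_vector \<Rightarrow> real"
  assumes "convex_on UNIV f" and "(f has_derivative (\<lambda>_. 0)) (at x)"
  shows "f x \<le> f y"
  using convex_on_ge_tangent[OF assms] by simp

lemma convex_constrained_minimum_constraint_active:
  fixes f g :: "'a::real_vector \<Rightarrow> real"
  assumes cf: "convex_on UNIV f" and cg: "convex_on UNIV g"
    and min: "\<And>r. g r \<le> c \<Longrightarrow> f p \<le> f r"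
    and feasible: "g p \<le> c" and better: "f q < f p"
  shows "g p = c"
proof (rule ccontr)
  assume "g p \<noteq> c"
  with feasible have gp: "g p < c"
    by simp
  have gq: "c < g q"
    using min[of q] better by fastforce
  define t where "t = (c - g p) / (g q - g p)"
  have t: "0 < t" "t < 1"
    using gp gq by (auto simp: t_def field_simps)
  define r where "r = (1 - t) *\<^sub>R p + t *\<^sub>R q"
  have "g r \<le> (1 - t) * g p + t * g q"
    unfolding r_def using convex_onD[OF cg, of t p q] t by simp
  also have "\<dots> = g p + t * (g q - g p)"
    by (simp add: algebra_simps)
  also have "\<dots> = c"
    using gp gq by (simp add: t_def)
  finally have "f p \<le> f r"
    by (rule min)
  also have "f r \<le> (1 - t) * f p + t * f q"
    unfolding r_def using convex_onD[OF cf, of t p q] t by simp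
  also have "\<dots> < f p"
    using t better by (simp add: algebra_simps)
  finally show False
    by simp
qed

lemma constrained_minimum_no_common_descent:
  fixes f g :: "'a::real_normed_vector \<Rightarrow> real"
  assumes Df: "(f has_derivative Df) (at p)" and Dg: "(g has_derivative Dg) (at p)"
    and min: "\<And>q. g q \<le> g p \<Longrightarrow> f p \<le> f q"
    and "Dg d < 0"
  shows "0 \<le> Df d"
proof (rule ccontr)
  assume "\<not> 0 \<le> Df d"
  then have "\<exists>\<delta>>0. \<forall>h>0. h < \<delta> \<longrightarrow> f (p + h *\<^sub>R d) < f p"
    using DERIV_neg_dec_right[OF has_field_derivative_along_line[OF Df]] by simp
  then obtain \<delta>f where "0 < \<delta>f" and f_dec: "\<And>h. 0 < h \<Longrightarrow> h < \<delta>f \<Longrightarrow> f (p + h *\<^sub>R d) < f p"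
    by blast
  have "\<exists>\<delta>>0. \<forall>h>0. h < \<delta> \<longrightarrow> g (p + h *\<^sub>R d) < g p"
    using DERIV_neg_dec_right[OF has_field_derivative_along_line[OF Dg] \<open>Dg d < 0\<close>] by simp
  then obtain \<delta>g where "0 < \<delta>g" and g_dec: "\<And>h. 0 < h \<Longrightarrow> h < \<delta>g \<Longrightarrow> g (p + h *\<^sub>R d) < g p"
    by blast
  define h where "h = min \<delta>f \<delta>g / 2"
  have h: "0 < h" "h < \<delta>f" "h < \<delta>g"
    using \<open>0 < \<delta>f\<close> \<open>0 < \<delta>g\<close> by (auto simp: h_def)
  then have "f p \<le> f (p + h *\<^sub>R d)"
    using g_dec by (intro min less_imp_le) simp
  with f_dec h show False
    by fastforce
qed

lemma farkas_single_constraint: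
  fixes Df Dg :: "'a::real_vector \<Rightarrow> real"
  assumes lf: "linear Df" and lg: "linear Dg" and "Dg \<noteq> (\<lambda>_. 0)"
    and descent: "\<And>d. Dg d < 0 \<Longrightarrow> 0 \<le> Df d"
  shows "\<exists>\<mu>\<ge>0. \<forall>u. Df u + \<mu> * Dg u = 0"
proof -
  obtain v where "Dg v \<noteq> 0"
    using \<open>Dg \<noteq> (\<lambda>_. 0)\<close> by auto
  define e where "e = (1 / Dg v) *\<^sub>R v"
  have e: "Dg e = 1"
    using \<open>Dg v \<noteq> 0\<close> by (simp add: e_def linear_cmul[OF lg])
  define \<mu> where "\<mu> = - Df e"
  have "0 \<le> \<mu>"
    using descent[of "- e"] e by (simp add: \<mu>_def linear_neg[OF lf] linear_neg[OF lg])
  have kernel: "Df w = 0" if "Dg w = 0" for w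
  proof -
    have "\<bar>Df w\<bar> \<le> \<epsilon>" if "0 < \<epsilon>" for \<epsilon>
    proof -
      define s where "s = \<epsilon> / (\<mu> + 1)"
      have "0 < s" "s * \<mu> \<le> \<epsilon>"
        using \<open>0 < \<epsilon>\<close> \<open>0 \<le> \<mu>\<close> by (auto simp: s_def field_simps)
      moreover have "0 \<le> Df (w - s *\<^sub>R e)" "0 \<le> Df (- w - s *\<^sub>R e)"
        using \<open>0 < s\<close> \<open>Dg w = 0\<close> e
        by (auto intro!: descent simp: linear_diff[OF lg] linear_neg[OF lg] linear_cmul[OF lg])
      ultimately show ?thesis
        by (simp add: linear_diff[OF lf] linear_neg[OF lf] linear_cmul[OF lf] \<mu>_def)
    qed
    then show ?thesis
      using field_le_epsilon[of "\<bar>Df w\<bar>" 0] by simp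
  qed
  have "Df u + \<mu> * Dg u = 0" for u
    using kernel[of "u - Dg u *\<^sub>R e"] e
    by (simp add: linear_diff[OF lf] linear_diff[OF lg] linear_cmul[OF lf] linear_cmul[OF lg] \<mu>_def)
  with \<open>0 \<le> \<mu>\<close> show ?thesis
    by blast
qed

lemma constrained_minimum_lagrange_multiplier:
  fixes f g :: "'a::real_normed_vector \<Rightarrow> real"
  assumes Df: "(f has_derivative Df) (at p)" and Dg: "(g has_derivative Dg) (at p)"
    and "\<And>q. g q \<le> g p \<Longrightarrow> f p \<le> f q" and "Dg \<noteq> (\<lambda>_. 0)"
  shows "\<exists>\<mu>\<ge>0. \<forall>u. Df u + \<mu> * Dg u = 0"
  using farkas_single_constraint[OF has_derivative_linear[OF Df] has_derivative_linear[OF Dg]]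
    constrained_minimum_no_common_descent[OF Df Dg] assms(3,4) by blast

lemma convex_stationary_combination_minimum:
  fixes f g :: "'a::real_normed_vector \<Rightarrow> real"
  assumes "convex_on UNIV f" and "convex_on UNIV g"
    and "(f has_derivative Df) (at p)" and "(g has_derivative Dg) (at p)"
    and "0 \<le> \<mu>" and stationary: "\<And>u. Df u + \<mu> * Dg u = 0"
  shows "f p + \<mu> * g p \<le> f q + \<mu> * g q"
proof -
  let ?h = "\<lambda>x. f x + \<mu> * g x"
  have "convex_on UNIV ?h"
    using assms(1,2,5) by (intro convex_on_add convex_on_cmul)
  moreover have "(?h has_derivative (\<lambda>u. Df u + \<mu> * Dg u)) (at p)"
    using assms(3,4) by (intro derivative_intros)
  ultimately show ?thesis
    using convex_on_zero_derivative_imp_minimum[of ?h p q] by (simp add: stationary)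
qed

lemma scaling_function_differentiable:
  assumes "scaling_function F A"
  shows "(\<lambda>p. F p \<theta>) differentiable (at p)"
proof -
  obtain Df where Df: "\<And>z. ((\<lambda>z. F (fst z) (snd z)) has_derivative blinfun_apply (Df z)) (at z)"
    using assms unfolding scaling_function_def C2_def by blast
  have "((\<lambda>p. (p, \<theta>)) has_derivative (\<lambda>p. (p, 0))) (at p)"
    by (auto intro!: derivative_eq_intros)
  from has_derivative_compose[OF this Df] show ?thesis
    by (auto intro: differentiableI)
qed

lemma dual_fun_le_lagrangian: "dual_fun FA FB \<theta> l \<le> ereal (lagrangian FA FB p \<theta> l)"
  unfolding dual_fun_def by (rule INF_lower) simp

lemma dual_fun_ge:
  assumes "\<And>p. c \<le> lagrangian FA FB p \<theta> l"
  shows "ereal c \<le> dual_fun FA FB \<theta> l"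
  unfolding dual_fun_def using assms by (intro INF_greatest) simp

lemma optimal_dual_pos:
  assumes "optimal_dual FA FB \<theta> ls" and "0 \<le> l"
    and "dual_fun FA FB \<theta> 0 < dual_fun FA FB \<theta> l"
  shows "0 < ls"
proof -
  have "0 \<le> ls" "dual_fun FA FB \<theta> l \<le> dual_fun FA FB \<theta> ls"
    using assms(1,2) unfolding optimal_dual_def by auto
  then show ?thesis
    using assms(3) by (cases "ls = 0") auto
qed

theorem lemma2:
  fixes FA FB :: "'p::euclidean_space \<Rightarrow> 't::euclidean_space \<Rightarrow> real"
    and A B :: "'p set" and \<theta> :: 't and ps :: 'p and ls :: real
  assumes "scaling_function FA A"
    and "scaling_function FB B"
    and "A \<inter> B = {}"
    and "optimal_primal FA FB \<theta> ps"
    and "optimal_dual FA FB \<theta> ls"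
  shows "FA ps \<theta> > 1 \<and> ls > 0 \<and>
         frechet_derivative (\<lambda>p. FB p \<theta>) (at ps) \<noteq> (\<lambda>_. 0) \<and>
         FB ps \<theta> = 1"
proof -
  obtain pA pB where "FA pA \<theta> < 1" "FB pB \<theta> < 1"
    and cvx: "convex_on UNIV (\<lambda>p. FA p \<theta>)" "convex_on UNIV (\<lambda>p. FB p \<theta>)"
    and "A = {p. FA p \<theta> \<le> 1}" "B = {p. FB p \<theta> \<le> 1}"
    using assms(1,2) unfolding scaling_function_def by blast
  have feasible: "FB ps \<theta> \<le> 1" and min: "\<And>q. FB q \<theta> \<le> 1 \<Longrightarrow> FA ps \<theta> \<le> FA q \<theta>"
    using assms(4) unfolding optimal_primal_def by auto
  have "1 < FA ps \<theta>"
    using assms(3) \<open>A = _\<close> \<open>B = _\<close> feasible by force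
  with \<open>FA pA \<theta> < 1\<close> have "FA pA \<theta> < FA ps \<theta>"
    by linarith
  then have active: "FB ps \<theta> = 1"
    using convex_constrained_minimum_constraint_active[OF cvx min feasible] by simp
  define DA DB where "DA = frechet_derivative (\<lambda>p. FA p \<theta>) (at ps)"
    and "DB = frechet_derivative (\<lambda>p. FB p \<theta>) (at ps)"
  have DA: "((\<lambda>p. FA p \<theta>) has_derivative DA) (at ps)"
    and DB: "((\<lambda>p. FB p \<theta>) has_derivative DB) (at ps)"
    using assms(1,2) unfolding DA_def DB_def
    by (simp_all add: scaling_function_differentiable frechet_derivative_works[symmetric])
  have "DB \<noteq> (\<lambda>_. 0)"
    using convex_on_zero_derivative_imp_minimum[OF cvx(2), of ps pB] DB \<open>FB pB \<theta> < 1\<close> active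
    by auto
  moreover have "\<And>q. FB q \<theta> \<le> FB ps \<theta> \<Longrightarrow> FA ps \<theta> \<le> FA q \<theta>"
    using min active by simp
  ultimately obtain \<mu> where "0 \<le> \<mu>" and stationary: "\<And>u. DA u + \<mu> * DB u = 0"
    using constrained_minimum_lagrange_multiplier[OF DA DB] by blast
  have "dual_fun FA FB \<theta> 0 \<le> ereal (FA pA \<theta>)"
    using dual_fun_le_lagrangian[of FA FB \<theta> 0 pA] by (simp add: lagrangian_def)
  also have "\<dots> < ereal (FA ps \<theta>)"
    using \<open>FA pA \<theta> < FA ps \<theta>\<close> by simp
  also have "\<dots> \<le> dual_fun FA FB \<theta> \<mu>"
    using convex_stationary_combination_minimum[OF cvx DA DB \<open>0 \<le> \<mu>\<close> stationary] active
    by (intro dual_fun_ge) (simp add: lagrangian_def algebra_simps)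
  finally have "0 < ls"
    by (rule optimal_dual_pos[OF assms(5) \<open>0 \<le> \<mu>\<close>])
  with \<open>1 < FA ps \<theta>\<close> \<open>DB \<noteq> _\<close> active show ?thesis
    by (simp add: DB_def)
qed

end
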